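(* Let $p>p_0\ge1$ and $M$ be integers with $p_0\le M\le p$, let $f_n\in C[0,1]^p$, and suppose there exist $\widetilde f_n\in C[0,1]^{p_0}$ and $\eta_n>0$ with $\sup_{\mathbf{x}\in[0,1]^p}|f_n(\mathbf{x})-\widetilde f_n(x_1,\ldots,x_{p_0})|<\eta_n$, and a positive constant $\tau$ with $|\int_{[0,1]^p}x_jf_n(\mathbf{x})d\mathbf{x}-\frac12\int_{[0,1]^p}f_n(\mathbf{x})d\mathbf{x}|>\tau$ for each $j=1,\ldots,p_0$. Then for every $\mathcal{A}_1\subset Z_p$ with $|\mathcal{A}_1|=M$ and $\mathcal{A}_0\setminus\mathcal{A}_1\ne\emptyset$, $$\int_{[0,1]^p}\left(f_n(\mathbf{x})-\beta_0(\mathcal{A}_1)-\boldsymbol\beta_{Z_p}(\mathcal{A}_1)'\mathbf{x}\right)^2d\mathbf{x}-\int_{[0,1]^p}\left(f_n(\mathbf{x})-\beta_0(\mathcal{A}_0)-\boldsymbol\beta_{Z_p}(\mathcal{A}_0)'\mathbf{x}\right)^2d\mathbf{x}\ge12\tau^2-12(M-p_0+1)\eta_n^2.$$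
   Context: $Z_d=\{1,\ldots,d\}$, $\mathcal{A}_0=Z_{p_0}$. For $\mathcal{A}\subset Z_p$ and $\mathbf{x}\in[0,1]^p$, $\mathbf{x}_{\mathcal{A}}$ is the subvector of coordinates in $\mathcal{A}$. $(\beta_0(\mathcal{A}),\boldsymbol\beta(\mathcal{A})')'\in\mathbb{R}\times\mathbb{R}^{|\mathcal{A}|}$ minimizes $\int_{[0,1]^p}[f_n(\mathbf{x})-\phi_0-\boldsymbol\phi'\mathbf{x}_{\mathcal{A}}]^2d\mathbf{x}$ over $(\phi_0,\boldsymbol\phi)$, and $\boldsymbol\beta_{Z_p}(\mathcal{A})\in\mathbb{R}^p$ equals $\boldsymbol\beta(\mathcal{A})$ on coordinates in $\mathcal{A}$ and $0$ elsewhere. *)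

theory Defs
  imports "HOL-Probability.Probability"
begin

text \<open>Points of [0,1]^p are functions x :: nat => real on the index set Z_p = {1..p}
  (extensional, i.e. undefined outside {1..p}), as in the product measure space.\<close>

definition cube :: "nat \<Rightarrow> (nat \<Rightarrow> real) set" where
  "cube p = PiE {1..p} (\<lambda>_. {0..1})"

definition cube_measure :: "nat \<Rightarrow> (nat \<Rightarrow> real) measure" where
  "cube_measure p = PiM {1..p} (\<lambda>_. restrict_space lborel {0..1})"

definition lsq_risk :: "nat \<Rightarrow> ((nat \<Rightarrow> real) \<Rightarrow> real) \<Rightarrow> nat set \<Rightarrow> real \<Rightarrow> (nat \<Rightarrow> real) \<Rightarrow> real" where
  "lsq_risk p f A phi0 phi =
     (\<integral>x. (f x - phi0 - (\<Sum>j\<in>A. phi j * x j))\<^sup>2 \<partial>cube_measure p)"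

text \<open>(beta_0(A), beta_{Z_p}(A)): a minimiser of the risk over (phi0, phi) with phi
  supported on A (phi is the zero-extension to Z_p of a vector in R^{|A|}).\<close>
definition beta_pair :: "nat \<Rightarrow> ((nat \<Rightarrow> real) \<Rightarrow> real) \<Rightarrow> nat set \<Rightarrow> real \<times> (nat \<Rightarrow> real)" where
  "beta_pair p f A = (SOME (b0, b). (\<forall>j. j \<notin> A \<longrightarrow> b j = 0) \<and>
      (\<forall>c0 c. (\<forall>j. j \<notin> A \<longrightarrow> c j = 0) \<longrightarrow> lsq_risk p f A b0 b \<le> lsq_risk p f A c0 c))"

definition beta0 :: "nat \<Rightarrow> ((nat \<Rightarrow> real) \<Rightarrow> real) \<Rightarrow> nat set \<Rightarrow> real" where
  "beta0 p f A = fst (beta_pair p f A)"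

definition betaZ :: "nat \<Rightarrow> ((nat \<Rightarrow> real) \<Rightarrow> real) \<Rightarrow> nat set \<Rightarrow> nat \<Rightarrow> real" where
  "betaZ p f A = snd (beta_pair p f A)"

end

theory Submission
  imports Defs
begin

text \<open>Under the uniform distribution on the cube the centred coordinates x_j - 1/2 are
  uncorrelated with variance 1/12 and uncorrelated with every function not depending on x_j.
  Hence the risk of any linear predictor on the coordinates A is the residual variance
  E f^2 - (E f)^2 - 12 \<Sum>j\<in>A C_j^2, with C_j = E[(x_j - 1/2) f], plus a nonnegative square,
  so passing from A_0 to A_1 changes the optimal risk by
  12 \<Sum>j\<in>A_0-A_1 C_j^2 - 12 \<Sum>j\<in>A_1-A_0 C_j^2. The first sum exceeds \<tau>^2; for j outside A_0
  the coefficient C_j is unchanged when f is replaced by the approximation error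
  g = f - ft, so by Bessel's inequality the second sum is at most E g^2 / 12 < \<eta>^2 / 12.\<close>

abbreviation lebesgue_01 :: "real measure" where
  "lebesgue_01 \<equiv> restrict_space lborel {0..1}"

lemma compact_cube: "compact (cube p)"
proof -
  have "cube p = PiE UNIV (\<lambda>i. if i \<in> {1..p} then {0..1::real} else {undefined})"
    unfolding cube_def PiE_def extensional_def Pi_def by auto
  moreover have "compactin (product_topology (\<lambda>_. euclidean) UNIV)
     (PiE UNIV (\<lambda>i. if i \<in> {1..p} then {0..1::real} else {undefined}))"
    by (simp add: compactin_PiE)
  ultimately show ?thesis by (simp add: euclidean_product_topology)
qed

lemma space_cube_measure: "space (cube_measure p) = cube p"
  unfolding cube_measure_def cube_def space_PiM by simp

lemma prob_space_cube_measure: "prob_space (cube_measure p)"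
  unfolding cube_measure_def
  by (rule prob_space_PiM) (auto intro!: prob_space_restrict_space)

lemma measure_space_cube_measure [simp]: "measure (cube_measure p) (space (cube_measure p)) = 1"
  using prob_space.prob_space[OF prob_space_cube_measure] .

lemma borel_measurable_coordinate: "(\<lambda>x. x i) \<in> borel_measurable (cube_measure p)"
proof (cases "i \<in> {1..p}")
  case True
  have "(\<lambda>x. x i) \<in> cube_measure p \<rightarrow>\<^sub>M lebesgue_01"
    unfolding cube_measure_def using True by (rule measurable_component_singleton)
  moreover have "(\<lambda>y. y) \<in> lebesgue_01 \<rightarrow>\<^sub>M borel"
    by (rule measurable_restrict_space1) simp
  ultimately show ?thesis using measurable_comp by (force simp: comp_def)
next
  case False
  then have "\<And>x. x \<in> space (cube_measure p) \<Longrightarrow> x i = undefined"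
    by (auto simp: space_cube_measure cube_def PiE_def extensional_def)
  then show ?thesis by (subst measurable_cong[where g="\<lambda>_. undefined"]) auto
qed

lemma measurable_id_cube: "(\<lambda>x. x) \<in> cube_measure p \<rightarrow>\<^sub>M restrict_space borel (cube p)"
proof (rule measurable_restrict_space2)
  show "(\<lambda>x. x) \<in> space (cube_measure p) \<rightarrow> cube p" by (simp add: space_cube_measure)
  have "(\<lambda>x. x) \<in> cube_measure p \<rightarrow>\<^sub>M PiM UNIV (\<lambda>_. (borel :: real measure))"
    by (rule measurable_PiM_single') (simp_all add: borel_measurable_coordinate space_PiM)
  then show "(\<lambda>x. x) \<in> cube_measure p \<rightarrow>\<^sub>M borel"
    using measurable_cong_sets[OF refl sets_PiM_equal_borel] by blast
qed

definition bounded_measurable :: "nat \<Rightarrow> ((nat \<Rightarrow> real) \<Rightarrow> real) \<Rightarrow> bool" where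
  "bounded_measurable p h \<longleftrightarrow>
     h \<in> borel_measurable (cube_measure p) \<and> (\<exists>B. \<forall>x\<in>cube p. \<bar>h x\<bar> \<le> B)"

lemma bounded_measurable_const [simp]: "bounded_measurable p (\<lambda>_. c)"
  unfolding bounded_measurable_def by auto

lemma bounded_measurable_coordinate [simp]:
  assumes "i \<in> {1..p}"
  shows "bounded_measurable p (\<lambda>x. x i)"
  unfolding bounded_measurable_def
proof (intro conjI borel_measurable_coordinate exI[of _ 1] ballI)
  fix x assume "x \<in> cube p"
  then show "\<bar>x i\<bar> \<le> 1" using assms by (auto simp: cube_def PiE_iff)
qed

lemma bounded_measurable_add [simp]:
  "bounded_measurable p f \<Longrightarrow> bounded_measurable p g \<Longrightarrow> bounded_measurable p (\<lambda>x. f x + g x)"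
  unfolding bounded_measurable_def
proof (elim conjE exE, intro conjI)
  fix B1 B2 assume "\<forall>x\<in>cube p. \<bar>f x\<bar> \<le> B1" "\<forall>x\<in>cube p. \<bar>g x\<bar> \<le> B2"
  then show "\<exists>B. \<forall>x\<in>cube p. \<bar>f x + g x\<bar> \<le> B"
    by (intro exI[of _ "B1 + B2"]) (auto intro: order.trans[OF abs_triangle_ineq] add_mono)
qed auto

lemma bounded_measurable_mult [simp]:
  "bounded_measurable p f \<Longrightarrow> bounded_measurable p g \<Longrightarrow> bounded_measurable p (\<lambda>x. f x * g x)"
  unfolding bounded_measurable_def
proof (elim conjE exE, intro conjI)
  fix B1 B2 assume "\<forall>x\<in>cube p. \<bar>f x\<bar> \<le> B1" "\<forall>x\<in>cube p. \<bar>g x\<bar> \<le> B2"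
  then show "\<exists>B. \<forall>x\<in>cube p. \<bar>f x * g x\<bar> \<le> B"
    by (intro exI[of _ "B1 * B2"]) (auto simp: abs_mult intro!: mult_mono)
qed auto

lemma bounded_measurable_diff [simp]:
  "bounded_measurable p f \<Longrightarrow> bounded_measurable p g \<Longrightarrow> bounded_measurable p (\<lambda>x. f x - g x)"
  using bounded_measurable_add[of p f "\<lambda>x. - g x"] bounded_measurable_mult[of p "\<lambda>_. -1" g]
  by simp

lemma bounded_measurable_power2 [simp]:
  "bounded_measurable p f \<Longrightarrow> bounded_measurable p (\<lambda>x. (f x)\<^sup>2)"
  using bounded_measurable_mult[of p f f] by (simp add: power2_eq_square)

lemma bounded_measurable_sum [simp]:
  "(\<And>j. j \<in> A \<Longrightarrow> bounded_measurable p (f j)) \<Longrightarrow> bounded_measurable p (\<lambda>x. \<Sum>j\<in>A. f j x)"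
proof (induct A rule: infinite_finite_induct)
  case (insert a F)
  then show ?case using bounded_measurable_add[of p "f a" "\<lambda>x. \<Sum>j\<in>F. f j x"] by simp
qed auto

lemma integrable_bounded_measurable [simp]:
  assumes "bounded_measurable p f"
  shows "integrable (cube_measure p) f"
proof -
  interpret prob_space "cube_measure p" by (rule prob_space_cube_measure)
  obtain B where "f \<in> borel_measurable (cube_measure p)" "\<forall>x\<in>cube p. \<bar>f x\<bar> \<le> B"
    using assms unfolding bounded_measurable_def by blast
  then show ?thesis
    by (intro integrable_const_bound[where B=B]) (auto simp: space_cube_measure)
qed

lemma bounded_measurable_continuous_on:
  assumes "continuous_on (cube p) f"
  shows "bounded_measurable p f"
  unfolding bounded_measurable_def
proof
  show "f \<in> borel_measurable (cube_measure p)"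
    using measurable_comp[OF measurable_id_cube borel_measurable_continuous_on_restrict[OF assms]]
    by (simp add: comp_def)
  have "bounded (f ` cube p)"
    by (rule compact_imp_bounded[OF compact_continuous_image[OF assms compact_cube]])
  then show "\<exists>B. \<forall>x\<in>cube p. \<bar>f x\<bar> \<le> B"
    unfolding bounded_iff by auto
qed

lemma bounded_measurable_restrict:
  assumes "q \<le> p" and "continuous_on (cube q) f"
  shows "bounded_measurable p (\<lambda>x. f (restrict x {1..q}))"
  unfolding bounded_measurable_def
proof
  have "(\<lambda>x. restrict x {1..q}) \<in> cube_measure p \<rightarrow>\<^sub>M cube_measure q"
    unfolding cube_measure_def by (rule measurable_restrict_subset) (use assms(1) in auto)
  then show "(\<lambda>x. f (restrict x {1..q})) \<in> borel_measurable (cube_measure p)"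
    using bounded_measurable_continuous_on[OF assms(2)] measurable_comp
    unfolding bounded_measurable_def by (force simp: comp_def)
  have "restrict x {1..q} \<in> cube q" if "x \<in> cube p" for x
    using that assms(1) by (auto simp: cube_def PiE_iff)
  then show "\<exists>B. \<forall>x\<in>cube p. \<bar>f (restrict x {1..q})\<bar> \<le> B"
    using bounded_measurable_continuous_on[OF assms(2)]
    unfolding bounded_measurable_def by blast
qed

lemma integral_square_le_SUP:
  assumes "bounded_measurable p g" and "(SUP x\<in>cube p. \<bar>g x\<bar>) \<le> eta"
  shows "(\<integral>x. (g x)\<^sup>2 \<partial>cube_measure p) \<le> eta\<^sup>2"
proof -
  have "\<bar>g x\<bar> \<le> eta" if "x \<in> cube p" for x
  proof -
    have "bdd_above ((\<lambda>x. \<bar>g x\<bar>) ` cube p)"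
      using assms(1) unfolding bounded_measurable_def by (auto intro: bdd_aboveI2)
    then show ?thesis using cSUP_upper[OF that] assms(2) by fastforce
  qed
  then have "(g x)\<^sup>2 \<le> eta\<^sup>2" if "x \<in> cube p" for x
    using power_mono[of "\<bar>g x\<bar>" eta 2] that by simp
  then have "(\<integral>x. (g x)\<^sup>2 \<partial>cube_measure p) \<le> (\<integral>x. eta\<^sup>2 \<partial>cube_measure p)"
    using assms(1) by (intro integral_mono) (auto simp: space_cube_measure)
  then show ?thesis by simp
qed

lemma integral_lebesgue_01_FTC:
  fixes F f :: "real \<Rightarrow> real"
  assumes "\<And>x. 0 \<le> x \<Longrightarrow> x \<le> 1 \<Longrightarrow> (F has_real_derivative f x) (at x)"
    and "continuous_on {0..1} f"
  shows "(\<integral>y. f y \<partial>lebesgue_01) = F 1 - F 0"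
proof -
  have "(\<integral>y. f y \<partial>lebesgue_01) = integral\<^sup>L lborel (\<lambda>x. indicator {0..1} x *\<^sub>R f x)"
    by (rule integral_restrict_space) simp
  also have "\<dots> = F 1 - F 0"
    by (rule integral_FTC_atLeastAtMost)
       (auto intro: assms has_field_derivative_at_within
         simp: has_real_derivative_iff_has_vector_derivative[symmetric])
  finally show ?thesis .
qed

lemma integral_lebesgue_01_centered: "(\<integral>y. y - 1/2 \<partial>lebesgue_01) = 0"
proof -
  have "(\<integral>y. y - 1/2 \<partial>lebesgue_01) = (\<lambda>x. x\<^sup>2/2 - x/2) 1 - (\<lambda>x. x\<^sup>2/2 - x/2) (0::real)"
    by (rule integral_lebesgue_01_FTC) (auto intro!: derivative_eq_intros continuous_intros)
  then show ?thesis by simp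
qed

lemma integral_lebesgue_01_centered_square: "(\<integral>y. (y - 1/2)\<^sup>2 \<partial>lebesgue_01) = 1/12"
proof -
  have "(\<integral>y. (y - 1/2)\<^sup>2 \<partial>lebesgue_01) = (\<lambda>x. (x - 1/2)^3/3) 1 - (\<lambda>x. (x - 1/2)^3/3) (0::real)"
    by (rule integral_lebesgue_01_FTC)
       (auto intro!: derivative_eq_intros continuous_intros simp: power2_eq_square)
  then show ?thesis by (simp add: power3_eq_cube)
qed

lemma integral_coordinate_insert:
  fixes \<phi> :: "real \<Rightarrow> real" and h :: "(nat \<Rightarrow> real) \<Rightarrow> real"
  assumes i: "i \<in> {1..p}"
    and \<phi>: "\<phi> \<in> borel_measurable borel" "\<forall>y\<in>{0..1}. \<bar>\<phi> y\<bar> \<le> C"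
    and h: "bounded_measurable p h" "\<forall>x\<in>cube p. \<forall>y\<in>{0..1}. h (x(i:=y)) = h x"
  shows "(\<integral>x. \<phi> (x i) * h x \<partial>cube_measure p) =
     (\<integral>y. \<phi> y \<partial>lebesgue_01) * (\<integral>x. h (x(i:=0)) \<partial>PiM ({1..p}-{i}) (\<lambda>_. lebesgue_01))"
proof -
  interpret product_sigma_finite "\<lambda>_::nat. lebesgue_01"
    unfolding product_sigma_finite_def
    by (auto intro!: prob_space_imp_sigma_finite prob_space_restrict_space)
  let ?I = "{1..p}-{i}"
  have cube_measure_insert: "cube_measure p = PiM (insert i ?I) (\<lambda>_. lebesgue_01)"
    using i by (simp add: cube_measure_def insert_absorb)
  have "bounded_measurable p (\<lambda>x. \<phi> (x i))"
    unfolding bounded_measurable_def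
  proof
    show "(\<lambda>x. \<phi> (x i)) \<in> borel_measurable (cube_measure p)"
      using measurable_comp[OF borel_measurable_coordinate \<phi>(1)] by (simp add: comp_def)
    show "\<exists>B. \<forall>x\<in>cube p. \<bar>\<phi> (x i)\<bar> \<le> B"
      using i \<phi>(2) by (intro exI[of _ C]) (auto simp: cube_def)
  qed
  then have "integrable (cube_measure p) (\<lambda>x. \<phi> (x i) * h x)"
    using h(1) by simp
  then have "(\<integral>x. \<phi> (x i) * h x \<partial>cube_measure p) =
      (\<integral>x. (\<integral>y. \<phi> ((x(i:=y)) i) * h (x(i:=y)) \<partial>lebesgue_01) \<partial>PiM ?I (\<lambda>_. lebesgue_01))"
    unfolding cube_measure_insert by (intro product_integral_insert) auto
  also have "\<dots> = (\<integral>x. (\<integral>y. \<phi> y \<partial>lebesgue_01) * h (x(i:=0)) \<partial>PiM ?I (\<lambda>_. lebesgue_01))"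
  proof (rule Bochner_Integration.integral_cong[OF refl])
    fix x assume x: "x \<in> space (PiM ?I (\<lambda>_. lebesgue_01))"
    have "x(i:=0) \<in> cube p"
      using x i by (auto simp: space_PiM cube_def PiE_def extensional_def Pi_def)
    then have "h ((x(i:=0))(i:=y)) = h (x(i:=0))" if "y \<in> {0..1}" for y
      using h(2) that by blast
    then have h_upd: "h (x(i:=y)) = h (x(i:=0))" if "y \<in> {0..1}" for y
      using that by (simp only: fun_upd_upd)
    have "(\<integral>y. \<phi> ((x(i:=y)) i) * h (x(i:=y)) \<partial>lebesgue_01) =
        (\<integral>y. \<phi> y * h (x(i:=0)) \<partial>lebesgue_01)"
    proof (rule Bochner_Integration.integral_cong[OF refl])
      fix y assume "y \<in> space lebesgue_01"
      then show "\<phi> ((x(i:=y)) i) * h (x(i:=y)) = \<phi> y * h (x(i:=0))"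
        using h_upd[of y] by simp
    qed
    then show "(\<integral>y. \<phi> ((x(i:=y)) i) * h (x(i:=y)) \<partial>lebesgue_01) =
        (\<integral>y. \<phi> y \<partial>lebesgue_01) * h (x(i:=0))"
      by simp
  qed
  finally show ?thesis by simp
qed

lemma integral_coordinate_separate:
  fixes \<phi> :: "real \<Rightarrow> real" and h :: "(nat \<Rightarrow> real) \<Rightarrow> real"
  assumes "i \<in> {1..p}"
    and "\<phi> \<in> borel_measurable borel" "\<forall>y\<in>{0..1}. \<bar>\<phi> y\<bar> \<le> C"
    and "bounded_measurable p h" "\<forall>x\<in>cube p. \<forall>y\<in>{0..1}. h (x(i:=y)) = h x"
  shows "(\<integral>x. \<phi> (x i) * h x \<partial>cube_measure p) =
     (\<integral>y. \<phi> y \<partial>lebesgue_01) * (\<integral>x. h x \<partial>cube_measure p)"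
  using integral_coordinate_insert[OF assms]
    integral_coordinate_insert[OF assms(1) _ _ assms(4,5), of "\<lambda>_. 1" 1]
  by (simp add: measure_restrict_space)

definition coord_cov :: "nat \<Rightarrow> ((nat \<Rightarrow> real) \<Rightarrow> real) \<Rightarrow> nat \<Rightarrow> real" where
  "coord_cov p h j = (\<integral>x. (x j - 1/2) * h x \<partial>cube_measure p)"

lemma coord_cov_eq:
  assumes "bounded_measurable p h" "j \<in> {1..p}"
  shows "coord_cov p h j = (\<integral>x. x j * h x \<partial>cube_measure p) - 1/2 * (\<integral>x. h x \<partial>cube_measure p)"
proof -
  have "coord_cov p h j = (\<integral>x. x j * h x - 1/2 * h x \<partial>cube_measure p)"
    unfolding coord_cov_def by (simp add: algebra_simps)
  also have "\<dots> = (\<integral>x. x j * h x \<partial>cube_measure p) - (\<integral>x. 1/2 * h x \<partial>cube_measure p)"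
    using assms by (intro Bochner_Integration.integral_diff) simp_all
  finally show ?thesis by simp
qed

lemma coord_cov_diff:
  assumes "bounded_measurable p f" "bounded_measurable p g" "j \<in> {1..p}"
  shows "coord_cov p (\<lambda>x. f x - g x) j = coord_cov p f j - coord_cov p g j"
  unfolding coord_cov_def right_diff_distrib
  using assms by (intro Bochner_Integration.integral_diff) simp_all

lemma coord_cov_indep:
  assumes "j \<in> {1..p}" "bounded_measurable p h" "\<forall>x\<in>cube p. \<forall>y\<in>{0..1}. h (x(j:=y)) = h x"
  shows "coord_cov p h j = 0"
proof -
  have "coord_cov p h j = (\<integral>y. y - 1/2 \<partial>lebesgue_01) * (\<integral>x. h x \<partial>cube_measure p)"
    unfolding coord_cov_def
    by (rule integral_coordinate_separate[OF assms(1) _ _ assms(2,3), where C=1]) auto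
  then show ?thesis by (simp add: integral_lebesgue_01_centered)
qed

lemma coord_cov_centered_coordinate:
  assumes "j \<in> {1..p}" "k \<in> {1..p}"
  shows "coord_cov p (\<lambda>x. x k - 1/2) j = (if j = k then 1/12 else 0)"
proof (cases "j = k")
  case True
  have "\<bar>(y - 1/2)\<^sup>2\<bar> \<le> (1::real)" if "y \<in> {0..1}" for y
    using that by (auto simp: abs_square_le_1)
  then have "(\<integral>x. (x j - 1/2)\<^sup>2 * 1 \<partial>cube_measure p) =
      (\<integral>y. (y - 1/2)\<^sup>2 \<partial>lebesgue_01) * (\<integral>x. 1 \<partial>cube_measure p)"
    by (intro integral_coordinate_separate[OF assms(1), where C=1]) auto
  then show ?thesis
    using True integral_lebesgue_01_centered_square by (simp add: coord_cov_def power2_eq_square)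
next
  case False
  then show ?thesis using assms by (auto intro: coord_cov_indep)
qed

lemma integral_mult_centered_linear_form:
  assumes "bounded_measurable p h" "A \<subseteq> {1..p}"
  shows "(\<integral>x. h x * (\<Sum>j\<in>A. c j * (x j - 1/2)) \<partial>cube_measure p) = (\<Sum>j\<in>A. c j * coord_cov p h j)"
proof -
  have "(\<integral>x. h x * (\<Sum>j\<in>A. c j * (x j - 1/2)) \<partial>cube_measure p) =
      (\<integral>x. (\<Sum>j\<in>A. c j * ((x j - 1/2) * h x)) \<partial>cube_measure p)"
    by (simp add: sum_distrib_left algebra_simps)
  also have "\<dots> = (\<Sum>j\<in>A. c j * coord_cov p h j)"
    using assms by (subst Bochner_Integration.integral_sum) (auto simp: coord_cov_def)
  finally show ?thesis .
qed

lemma integral_centered_linear_form: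
  assumes "A \<subseteq> {1..p}"
  shows "(\<integral>x. (\<Sum>j\<in>A. c j * (x j - 1/2)) \<partial>cube_measure p) = 0"
  using integral_mult_centered_linear_form[of p "\<lambda>_. 1" A c] assms
  by (simp add: coord_cov_indep subset_iff)

lemma integral_centered_linear_form_square:
  assumes A: "A \<subseteq> {1..p}"
  shows "(\<integral>x. (\<Sum>j\<in>A. c j * (x j - 1/2))\<^sup>2 \<partial>cube_measure p) = (\<Sum>j\<in>A. (c j)\<^sup>2 / 12)"
proof -
  let ?S = "\<lambda>x. \<Sum>j\<in>A. c j * (x j - 1/2)"
  have "finite A" using A by (rule finite_subset) simp
  have cov: "coord_cov p ?S k = c k / 12" if "k \<in> A" for k
  proof -
    have "coord_cov p ?S k = (\<integral>x. (x k - 1/2) * ?S x \<partial>cube_measure p)"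
      by (simp add: coord_cov_def)
    also have "\<dots> = (\<Sum>j\<in>A. c j * coord_cov p (\<lambda>x. x k - 1/2) j)"
      using A that by (intro integral_mult_centered_linear_form) auto
    also have "\<dots> = (\<Sum>j\<in>A. if j = k then c k / 12 else 0)"
      using A that by (intro sum.cong) (auto simp: coord_cov_centered_coordinate subset_iff)
    finally show ?thesis using \<open>finite A\<close> that by simp
  qed
  have "(\<integral>x. (?S x)\<^sup>2 \<partial>cube_measure p) = (\<integral>x. ?S x * ?S x \<partial>cube_measure p)"
    by (simp add: power2_eq_square)
  also have "\<dots> = (\<Sum>k\<in>A. c k * coord_cov p ?S k)"
    using A by (intro integral_mult_centered_linear_form) (auto simp: subset_iff)
  also have "\<dots> = (\<Sum>j\<in>A. (c j)\<^sup>2 / 12)"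
    using cov by (auto simp: power2_eq_square intro!: sum.cong)
  finally show ?thesis .
qed

definition min_lsq_risk :: "nat \<Rightarrow> ((nat \<Rightarrow> real) \<Rightarrow> real) \<Rightarrow> nat set \<Rightarrow> real" where
  "min_lsq_risk p h A = (\<integral>x. (h x)\<^sup>2 \<partial>cube_measure p) - (\<integral>x. h x \<partial>cube_measure p)\<^sup>2
     - 12 * (\<Sum>j\<in>A. (coord_cov p h j)\<^sup>2)"

lemma lsq_risk_decomp:
  assumes h: "bounded_measurable p h" and A: "A \<subseteq> {1..p}"
  shows "lsq_risk p h A c0 c = min_lsq_risk p h A
     + (c0 + (\<Sum>j\<in>A. c j / 2) - (\<integral>x. h x \<partial>cube_measure p))\<^sup>2
     + (\<Sum>j\<in>A. (c j - 12 * coord_cov p h j)\<^sup>2 / 12)"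
proof -
  define e where "e = c0 + (\<Sum>j\<in>A. c j / 2)"
  define S where "S x = (\<Sum>j\<in>A. c j * (x j - 1/2))" for x :: "nat \<Rightarrow> real"
  have S: "bounded_measurable p S"
    unfolding S_def using A by (intro bounded_measurable_sum) auto
  have residual: "h x - c0 - (\<Sum>j\<in>A. c j * x j) = h x - e - S x" for x
    unfolding e_def S_def by (simp add: sum_subtractf right_diff_distrib sum_divide_distrib)
  have "(h x - c0 - (\<Sum>j\<in>A. c j * x j))\<^sup>2 =
      (h x)\<^sup>2 - 2 * e * h x - 2 * (h x * S x) + e\<^sup>2 + 2 * e * S x + (S x)\<^sup>2" for x
    unfolding residual by (simp add: power2_eq_square algebra_simps)
  then have "lsq_risk p h A c0 c =
      (\<integral>x. (h x)\<^sup>2 - 2 * e * h x - 2 * (h x * S x) + e\<^sup>2 + 2 * e * S x + (S x)\<^sup>2 \<partial>cube_measure p)"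
    unfolding lsq_risk_def by presburger
  also have "\<dots> = (\<integral>x. (h x)\<^sup>2 \<partial>cube_measure p) - 2 * e * (\<integral>x. h x \<partial>cube_measure p)
      - 2 * (\<Sum>j\<in>A. c j * coord_cov p h j) + e\<^sup>2 + (\<Sum>j\<in>A. (c j)\<^sup>2 / 12)"
    using h S A unfolding S_def
    by (simp add: integral_mult_centered_linear_form integral_centered_linear_form
        integral_centered_linear_form_square)
  also have "\<dots> = min_lsq_risk p h A + (e - (\<integral>x. h x \<partial>cube_measure p))\<^sup>2
      + (\<Sum>j\<in>A. (c j - 12 * coord_cov p h j)\<^sup>2 / 12)"
  proof -
    have "(\<Sum>j\<in>A. (c j - 12 * coord_cov p h j)\<^sup>2 / 12) =
        (\<Sum>j\<in>A. (c j)\<^sup>2 / 12 - 2 * (c j * coord_cov p h j) + 12 * (coord_cov p h j)\<^sup>2)"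
      by (intro sum.cong) (auto simp: power2_eq_square field_simps)
    then have "(\<Sum>j\<in>A. (c j - 12 * coord_cov p h j)\<^sup>2 / 12) = (\<Sum>j\<in>A. (c j)\<^sup>2 / 12)
        - 2 * (\<Sum>j\<in>A. c j * coord_cov p h j) + 12 * (\<Sum>j\<in>A. (coord_cov p h j)\<^sup>2)"
      by (simp add: sum.distrib sum_subtractf sum_distrib_left)
    then show ?thesis
      unfolding min_lsq_risk_def by (simp add: power2_eq_square algebra_simps)
  qed
  finally show ?thesis unfolding e_def .
qed

lemma min_lsq_risk_le_lsq_risk:
  assumes "bounded_measurable p h" "A \<subseteq> {1..p}"
  shows "min_lsq_risk p h A \<le> lsq_risk p h A c0 c"
  unfolding lsq_risk_decomp[OF assms] by (auto intro!: add_nonneg_nonneg sum_nonneg)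

lemma lsq_risk_coord_cov:
  assumes "bounded_measurable p h" "A \<subseteq> {1..p}" "\<And>j. j \<in> A \<Longrightarrow> c j = 12 * coord_cov p h j"
  shows "lsq_risk p h A ((\<integral>x. h x \<partial>cube_measure p) - (\<Sum>j\<in>A. c j / 2)) c = min_lsq_risk p h A"
  unfolding lsq_risk_decomp[OF assms(1,2)] using assms(3) by simp

lemma beta_pair_optimal:
  assumes h: "bounded_measurable p h" and A: "A \<subseteq> {1..p}"
  shows "lsq_risk p h A (beta0 p h A) (betaZ p h A) = min_lsq_risk p h A"
    and "\<And>j. j \<notin> A \<Longrightarrow> betaZ p h A j = 0"
proof -
  define optimal where "optimal = (\<lambda>b0 (b :: nat \<Rightarrow> real). (\<forall>j. j \<notin> A \<longrightarrow> b j = 0) \<and>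
      (\<forall>c0 c. (\<forall>j. j \<notin> A \<longrightarrow> c j = 0) \<longrightarrow> lsq_risk p h A b0 b \<le> lsq_risk p h A c0 c))"
  define w where "w j = (if j \<in> A then 12 * coord_cov p h j else 0)" for j
  define w0 where "w0 = (\<integral>x. h x \<partial>cube_measure p) - (\<Sum>j\<in>A. w j / 2)"
  have w: "lsq_risk p h A w0 w = min_lsq_risk p h A"
    unfolding w0_def by (rule lsq_risk_coord_cov[OF h A]) (simp add: w_def)
  then have "optimal w0 w"
    unfolding optimal_def using min_lsq_risk_le_lsq_risk[OF h A] by (auto simp: w_def)
  then have "\<exists>z. case z of (b0, b) \<Rightarrow> optimal b0 b"
    by auto
  then have "case beta_pair p h A of (b0, b) \<Rightarrow> optimal b0 b"
    unfolding beta_pair_def optimal_def[symmetric] by (rule someI_ex)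
  then have beta: "optimal (beta0 p h A) (betaZ p h A)"
    unfolding beta0_def betaZ_def by (simp add: case_prod_unfold)
  then show "\<And>j. j \<notin> A \<Longrightarrow> betaZ p h A j = 0"
    unfolding optimal_def by blast
  have "lsq_risk p h A (beta0 p h A) (betaZ p h A) \<le> lsq_risk p h A w0 w"
    using beta unfolding optimal_def by (simp add: w_def)
  then show "lsq_risk p h A (beta0 p h A) (betaZ p h A) = min_lsq_risk p h A"
    using w min_lsq_risk_le_lsq_risk[OF h A] by (simp add: order_antisym)
qed

lemma integral_residual_beta:
  assumes h: "bounded_measurable p h" and A: "A \<subseteq> {1..p}"
  shows "(\<integral>x. (h x - beta0 p h A - (\<Sum>j\<in>{1..p}. betaZ p h A j * x j))\<^sup>2 \<partial>cube_measure p)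
       = min_lsq_risk p h A"
proof -
  have "(\<Sum>j\<in>{1..p}. betaZ p h A j * x j) = (\<Sum>j\<in>A. betaZ p h A j * x j)" for x
    by (rule sum.mono_neutral_right) (use A beta_pair_optimal(2)[OF h A] in auto)
  then show ?thesis
    using beta_pair_optimal(1)[OF h A] by (simp add: lsq_risk_def)
qed

lemma coord_cov_Bessel:
  assumes "bounded_measurable p h" "A \<subseteq> {1..p}"
  shows "12 * (\<Sum>j\<in>A. (coord_cov p h j)\<^sup>2) \<le> (\<integral>x. (h x)\<^sup>2 \<partial>cube_measure p)"
proof -
  have "0 \<le> lsq_risk p h A (beta0 p h A) (betaZ p h A)"
    unfolding lsq_risk_def by simp
  then show ?thesis
    unfolding beta_pair_optimal(1)[OF assms] min_lsq_risk_def
    using zero_le_power2[of "\<integral>x. h x \<partial>cube_measure p"] by linarith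
qed

lemma min_lsq_risk_diff:
  assumes "finite A" "finite B"
  shows "min_lsq_risk p h B - min_lsq_risk p h A =
    12 * (\<Sum>j\<in>A - B. (coord_cov p h j)\<^sup>2) - 12 * (\<Sum>j\<in>B - A. (coord_cov p h j)\<^sup>2)"
proof -
  have "(\<Sum>j\<in>A. (coord_cov p h j)\<^sup>2) =
      (\<Sum>j\<in>A \<inter> B. (coord_cov p h j)\<^sup>2) + (\<Sum>j\<in>A - B. (coord_cov p h j)\<^sup>2)"
    using assms(1) by (rule sum.Int_Diff)
  moreover have "(\<Sum>j\<in>B. (coord_cov p h j)\<^sup>2) =
      (\<Sum>j\<in>A \<inter> B. (coord_cov p h j)\<^sup>2) + (\<Sum>j\<in>B - A. (coord_cov p h j)\<^sup>2)"
    using sum.Int_Diff[OF assms(2), of _ A] by (simp add: Int_commute)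
  ultimately show ?thesis
    unfolding min_lsq_risk_def by simp
qed

theorem lemma7:
  fixes p p0 M :: nat and f ft :: "(nat \<Rightarrow> real) \<Rightarrow> real" and eta tau :: real
    and A1 :: "nat set"
  assumes "1 \<le> p0" and "p0 < p" and "p0 \<le> M" and "M \<le> p"
    and "continuous_on (cube p) f"
    and "continuous_on (cube p0) ft"
    and "eta > 0"
    and "(SUP x\<in>cube p. \<bar>f x - ft (restrict x {1..p0})\<bar>) < eta"
    and "tau > 0"
    and "\<And>j. j \<in> {1..p0} \<Longrightarrow>
           \<bar>(\<integral>x. x j * f x \<partial>cube_measure p) - 1/2 * (\<integral>x. f x \<partial>cube_measure p)\<bar> > tau"
    and "A1 \<subseteq> {1..p}" and "card A1 = M" and "{1..p0} - A1 \<noteq> {}"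
  shows "(\<integral>x. (f x - beta0 p f A1 - (\<Sum>j\<in>{1..p}. betaZ p f A1 j * x j))\<^sup>2 \<partial>cube_measure p)
       - (\<integral>x. (f x - beta0 p f {1..p0} - (\<Sum>j\<in>{1..p}. betaZ p f {1..p0} j * x j))\<^sup>2 \<partial>cube_measure p)
       \<ge> 12 * tau\<^sup>2 - 12 * (real M - real p0 + 1) * eta\<^sup>2"
proof -
  let ?A0 = "{1..p0}" and ?C = "\<lambda>j. (coord_cov p f j)\<^sup>2"
  define g where "g x = f x - ft (restrict x ?A0)" for x
  have f: "bounded_measurable p f"
    using assms(5) by (rule bounded_measurable_continuous_on)
  have ft: "bounded_measurable p (\<lambda>x. ft (restrict x ?A0))"
    using assms(2,6) by (intro bounded_measurable_restrict) auto
  have g: "bounded_measurable p g"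
    unfolding g_def using f ft by simp
  have "coord_cov p (\<lambda>x. ft (restrict x ?A0)) j = 0" if "j \<in> {1..p} - ?A0" for j
  proof (rule coord_cov_indep[OF _ ft])
    have "restrict (x(j:=y)) ?A0 = restrict x ?A0" for x and y :: real
      using that by (auto simp: restrict_def)
    then show "\<forall>x\<in>cube p. \<forall>y\<in>{0..1}. ft (restrict (x(j:=y)) ?A0) = ft (restrict x ?A0)"
      by simp
  qed (use that in simp)
  then have "coord_cov p g j = coord_cov p f j" if "j \<in> A1 - ?A0" for j
    using that assms(11) coord_cov_diff[OF f ft] unfolding g_def by auto
  then have "12 * (\<Sum>j\<in>A1 - ?A0. ?C j) \<le> (\<integral>x. (g x)\<^sup>2 \<partial>cube_measure p)"
    using coord_cov_Bessel[OF g, of "A1 - ?A0"] assms(11) by auto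
  also have "\<dots> \<le> eta\<^sup>2"
    using integral_square_le_SUP[OF g] assms(8) unfolding g_def by simp
  finally have outside: "12 * (\<Sum>j\<in>A1 - ?A0. ?C j) \<le> eta\<^sup>2" .
  obtain j0 where j0: "j0 \<in> ?A0 - A1" using assms(13) by blast
  then have "tau < \<bar>coord_cov p f j0\<bar>"
    using assms(2) assms(10)[of j0] coord_cov_eq[OF f, of j0] by simp
  then have "tau\<^sup>2 < \<bar>coord_cov p f j0\<bar>\<^sup>2"
    using assms(9) by (intro power_strict_mono) auto
  then have "tau\<^sup>2 < ?C j0" by simp
  also have "\<dots> \<le> (\<Sum>j\<in>?A0 - A1. ?C j)"
    using j0 by (intro member_le_sum) auto
  finally have inside: "tau\<^sup>2 < (\<Sum>j\<in>?A0 - A1. ?C j)" .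
  have "finite A1" using assms(11) by (rule finite_subset) simp
  have "?A0 \<subseteq> {1..p}" using assms(2) by auto
  have "eta\<^sup>2 \<le> 12 * (real M - real p0 + 1) * eta\<^sup>2"
    using mult_right_mono[of 1 "12 * (real M - real p0 + 1)" "eta\<^sup>2"] assms(3) by simp
  then show ?thesis
    unfolding integral_residual_beta[OF f assms(11)] integral_residual_beta[OF f \<open>?A0 \<subseteq> {1..p}\<close>]
      min_lsq_risk_diff[OF finite_atLeastAtMost \<open>finite A1\<close>]
    using outside inside by linarith
qed

end
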